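(* Let a hinge $\Diamond_{ij;kl}$ (edge $e_{ij}$ with faces $f_{ijk},f_{ijl}$) carry radii $p,q,r,s>0$ at $v_k,v_i,v_l,v_j$ and inversive distances $a,b,c,d,e>1$ at $e_{ki},e_{il},e_{lj},e_{jk},e_{ij}$, and let the edge lengths be $u=\sqrt{p^2+q^2+2apq}$, $v=\sqrt{q^2+r^2+2bqr}$, $w=\sqrt{r^2+s^2+2crs}$, $x=\sqrt{s^2+p^2+2dsp}$, $y=\sqrt{q^2+s^2+2eqs}$. Suppose the faces $f_{ijk}$ (sides $u,x,y$) and $f_{ijl}$ (sides $v,w,y$) satisfy the triangle inequalities, develop the hinge into $\mathbb{E}^2$, and let $z=d_{\mathbb{E}}(v_k,v_l)$. Let $F=\frac{z^2-p^2-r^2}{2pr}$ and $f=\frac{ab+cd+ace+bde+\sqrt{\Delta_{ade}}\sqrt{\Delta_{bce}}}{e^2-1}$ with $\Delta_{xyz}=x^2+y^2+z^2+2xyz-1$, regarded as functions of the nine variables $p,q,r,s,a,b,c,d,e$. At any point where \[\frac{\sqrt{\Delta_{bce}}}{p}+\frac{\sqrt{\Delta_{ade}}}{r}=\frac{\sqrt{\Delta_{cdf}}}{q}+\frac{\sqrt{\Delta_{abf}}}{s}\] holds, we have $dF=df$. *)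

theory Defs
  imports "HOL-Analysis.Analysis"
begin

definition Delta :: "real \<Rightarrow> real \<Rightarrow> real \<Rightarrow> real" where
  "Delta x y z = x^2 + y^2 + z^2 + 2*x*y*z - 1"

definition idlen :: "real \<Rightarrow> real \<Rightarrow> real \<Rightarrow> real" where
  "idlen r1 r2 I = sqrt (r1^2 + r2^2 + 2*I*r1*r2)"

text \<open>Development of the hinge into the plane: v_i = (0,0), v_j = (y,0),
  v_k in the upper half plane with |v_k v_i| = u, |v_k v_j| = x,
  v_l in the lower half plane with |v_l v_i| = v, |v_l v_j| = w.\<close>
definition vk :: "real \<Rightarrow> real \<Rightarrow> real \<Rightarrow> real \<Rightarrow> real \<Rightarrow> real \<Rightarrow> real \<Rightarrow> real \<Rightarrow> real \<Rightarrow> real \<times> real" where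
  "vk p q r s a b c d e =
     (let u = idlen p q a; x = idlen s p d; y = idlen q s e;
          h = (u^2 + y^2 - x^2) / (2*y)
      in (h, sqrt (u^2 - h^2)))"

definition vl :: "real \<Rightarrow> real \<Rightarrow> real \<Rightarrow> real \<Rightarrow> real \<Rightarrow> real \<Rightarrow> real \<Rightarrow> real \<Rightarrow> real \<Rightarrow> real \<times> real" where
  "vl p q r s a b c d e =
     (let v = idlen q r b; w = idlen r s c; y = idlen q s e;
          h = (v^2 + y^2 - w^2) / (2*y)
      in (h, - sqrt (v^2 - h^2)))"

definition hinge_z :: "real \<Rightarrow> real \<Rightarrow> real \<Rightarrow> real \<Rightarrow> real \<Rightarrow> real \<Rightarrow> real \<Rightarrow> real \<Rightarrow> real \<Rightarrow> real" where
  "hinge_z p q r s a b c d e = dist (vk p q r s a b c d e) (vl p q r s a b c d e)"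

definition F_hinge :: "real \<Rightarrow> real \<Rightarrow> real \<Rightarrow> real \<Rightarrow> real \<Rightarrow> real \<Rightarrow> real \<Rightarrow> real \<Rightarrow> real \<Rightarrow> real" where
  "F_hinge p q r s a b c d e = ((hinge_z p q r s a b c d e)^2 - p^2 - r^2) / (2*p*r)"

definition f_hinge :: "real \<Rightarrow> real \<Rightarrow> real \<Rightarrow> real \<Rightarrow> real \<Rightarrow> real \<Rightarrow> real \<Rightarrow> real \<Rightarrow> real \<Rightarrow> real" where
  "f_hinge p q r s a b c d e =
     (a*b + c*d + a*c*e + b*d*e + sqrt (Delta a d e) * sqrt (Delta b c e)) / (e^2 - 1)"

definition F9 :: "real^9 \<Rightarrow> real" where
  "F9 X = F_hinge (X$1) (X$2) (X$3) (X$4) (X$5) (X$6) (X$7) (X$8) (X$9)"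

definition f9 :: "real^9 \<Rightarrow> real" where
  "f9 X = f_hinge (X$1) (X$2) (X$3) (X$4) (X$5) (X$6) (X$7) (X$8) (X$9)"

definition tri_ineq :: "real \<Rightarrow> real \<Rightarrow> real \<Rightarrow> bool" where
  "tri_ineq l1 l2 l3 \<longleftrightarrow> l1 < l2 + l3 \<and> l2 < l1 + l3 \<and> l3 < l1 + l2"

end

theory Submission
  imports Defs
begin

(* A circle with centre c and radius r corresponds to a spacelike vector of Minkowski space
   R^(3,1), and the inversive distance of two circles is minus the Lorentzian inner product of
   their vectors.  Consequently, for weights n with sum_i n_i / r_i = 0 the quadratic form of
   the inversive distance matrix of finitely many circles equals
   -|sum_i (n_i / r_i) c_i|^2 <= 0.
   For the four circles of the developed hinge this matrix has the entry F at (k,l), while the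
   matrix with f in that place has the kernel vector
   (sqrt Delta_bce, -sqrt Delta_cdf, sqrt Delta_ade, -sqrt Delta_abf).  Evaluating the form on
   this vector, corrected along (0,1,0,1) to meet the constraint, gives F <= f on the open set
   of admissible hinges.  Under the stated condition no correction is needed, and as v_k and
   v_l lie on opposite sides of the line v_i v_j the form vanishes there, so F = f.  Thus f - F
   has a minimum at the point and its differential vanishes. *)

lemma Delta_commute: "Delta x y z = Delta y x z"
  unfolding Delta_def by (simp add: algebra_simps)

lemma Delta_pos:
  assumes "1 < x" "0 \<le> y" "0 \<le> z"
  shows "0 < Delta x y z"
proof -
  have "1 < x\<^sup>2" using assms(1) by (simp add: one_less_power)
  moreover have "0 \<le> 2*x*y*z" using assms by simp
  ultimately show ?thesis
    unfolding Delta_def using zero_le_power2[of y] zero_le_power2[of z] by linarith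
qed

lemma Delta_f_square:
  fixes a b c d e SA SB :: real
  assumes "e\<^sup>2 \<noteq> 1" and SA: "SA\<^sup>2 = Delta a d e" and SB: "SB\<^sup>2 = Delta b c e"
  shows "Delta c d ((a*b + c*d + a*c*e + b*d*e + SA*SB) / (e\<^sup>2 - 1)) =
    (((a + d*e) * SB + (b + c*e) * SA) / (e\<^sup>2 - 1))\<^sup>2"
proof -
  define t where "t = a*b + c*d + a*c*e + b*d*e + SA*SB"
  define E where "E = e\<^sup>2 - 1"
  have "E \<noteq> 0" using assms(1) by (simp add: E_def)
  then have "Delta c d (t / E) = (E\<^sup>2 * (c\<^sup>2 + d\<^sup>2 - 1) + t\<^sup>2 + 2*c*d*E*t) / E\<^sup>2"
    unfolding Delta_def by (simp add: field_simps power2_eq_square)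
  also have "\<dots> = ((a + d*e) * SB + (b + c*e) * SA)\<^sup>2 / E\<^sup>2"
    using SA SB unfolding Delta_def t_def E_def by algebra
  finally show ?thesis
    by (simp add: t_def E_def power_divide)
qed

lemma inv_dist_matrix_kernel:
  fixes a b c d e SA SB :: real
  assumes "e\<^sup>2 \<noteq> 1" and SA: "SA\<^sup>2 = Delta a d e" and SB: "SB\<^sup>2 = Delta b c e"
  defines "f \<equiv> (a*b + c*d + a*c*e + b*d*e + SA*SB) / (e\<^sup>2 - 1)"
    and "SC \<equiv> ((a + d*e) * SB + (b + c*e) * SA) / (e\<^sup>2 - 1)"
    and "SD \<equiv> ((d + a*e) * SB + (c + b*e) * SA) / (e\<^sup>2 - 1)"
  shows "- SB - a*SC + f*SA - d*SD = 0" and "a*SB + SC + b*SA - e*SD = 0"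
    and "f*SB - b*SC - SA - c*SD = 0" and "d*SB - e*SC + c*SA + SD = 0"
proof -
  have E: "e\<^sup>2 - 1 \<noteq> 0" using assms(1) by simp
  then have f: "f * (e\<^sup>2 - 1) = a*b + c*d + a*c*e + b*d*e + SA*SB"
    and SC: "SC * (e\<^sup>2 - 1) = (a + d*e) * SB + (b + c*e) * SA"
    and SD: "SD * (e\<^sup>2 - 1) = (d + a*e) * SB + (c + b*e) * SA"
    by (simp_all add: f_def SC_def SD_def)
  have "(e\<^sup>2 - 1) * (- SB - a*SC + f*SA - d*SD) = 0"
    using f SC SD SA unfolding Delta_def by algebra
  moreover have "(e\<^sup>2 - 1) * (a*SB + SC + b*SA - e*SD) = 0"
    using SC SD by algebra
  moreover have "(e\<^sup>2 - 1) * (f*SB - b*SC - SA - c*SD) = 0"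
    using f SC SD SB unfolding Delta_def by algebra
  moreover have "(e\<^sup>2 - 1) * (d*SB - e*SC + c*SA + SD) = 0"
    using SC SD by algebra
  ultimately show "- SB - a*SC + f*SA - d*SD = 0" "a*SB + SC + b*SA - e*SD = 0"
    "f*SB - b*SC - SA - c*SD = 0" "d*SB - e*SC + c*SA + SD = 0"
    using E by simp_all
qed

definition inv_dist :: "'a::real_normed_vector \<Rightarrow> real \<Rightarrow> 'a \<Rightarrow> real \<Rightarrow> real" where
  "inv_dist c1 r1 c2 r2 = ((dist c1 c2)\<^sup>2 - r1\<^sup>2 - r2\<^sup>2) / (2 * r1 * r2)"

lemma inv_dist_commute: "inv_dist c1 r1 c2 r2 = inv_dist c2 r2 c1 r1"
  unfolding inv_dist_def by (simp add: dist_commute mult.commute mult.left_commute)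

lemma inv_dist_self [simp]: "r \<noteq> 0 \<Longrightarrow> inv_dist c r c r = -1"
  unfolding inv_dist_def by (simp add: power2_eq_square)

lemma inv_dist_eqI:
  assumes "(dist c1 c2)\<^sup>2 = r1\<^sup>2 + r2\<^sup>2 + 2*I*r1*r2" "r1 \<noteq> 0" "r2 \<noteq> 0"
  shows "inv_dist c1 r1 c2 r2 = I"
  using assms unfolding inv_dist_def by (simp add: field_simps)

lemma sum_inv_dist_row:
  fixes c :: "'i \<Rightarrow> 'a::real_inner"
  assumes "\<forall>i\<in>A. r i \<noteq> 0" and "\<rho> \<noteq> 0"
  shows "(\<Sum>i\<in>A. n i * inv_dist (c i) (r i) z \<rho>) =
    ((\<Sum>i\<in>A. n i / r i * ((norm (c i))\<^sup>2 - (r i)\<^sup>2))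
      + (\<Sum>i\<in>A. n i / r i) * ((norm z)\<^sup>2 - \<rho>\<^sup>2)
      - 2 * ((\<Sum>i\<in>A. (n i / r i) *\<^sub>R c i) \<bullet> z)) / (2 * \<rho>)"
proof -
  have summand: "n i * inv_dist (c i) (r i) z \<rho> =
      (n i / r i * ((norm (c i))\<^sup>2 - (r i)\<^sup>2) + n i / r i * ((norm z)\<^sup>2 - \<rho>\<^sup>2)
        - 2 * ((n i / r i) *\<^sub>R c i \<bullet> z)) / (2 * \<rho>)" if "i \<in> A" for i
    using assms that
    by (simp add: inv_dist_def dist_norm power2_norm_eq_inner inner_diff_left inner_diff_right
        inner_commute field_simps)
  show ?thesis
    by (simp add: sum.cong[OF refl summand] sum_divide_distrib[symmetric] sum.distrib sum_subtractf
        sum_distrib_left sum_distrib_right inner_sum_left)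
qed

lemma sum_inv_dist_quadratic:
  fixes c :: "'i \<Rightarrow> 'a::real_inner"
  assumes "\<forall>i\<in>A. r i \<noteq> 0"
  shows "(\<Sum>j\<in>A. \<Sum>i\<in>A. n i * n j * inv_dist (c i) (r i) (c j) (r j)) =
    (\<Sum>i\<in>A. n i / r i) * (\<Sum>i\<in>A. n i / r i * ((norm (c i))\<^sup>2 - (r i)\<^sup>2))
      - (norm (\<Sum>i\<in>A. (n i / r i) *\<^sub>R c i))\<^sup>2"
proof -
  define N where "N = (\<Sum>i\<in>A. n i / r i)"
  define Z where "Z = (\<Sum>i\<in>A. n i / r i * ((norm (c i))\<^sup>2 - (r i)\<^sup>2))"
  define X where "X = (\<Sum>i\<in>A. (n i / r i) *\<^sub>R c i)"
  have row: "(\<Sum>i\<in>A. n i * n j * inv_dist (c i) (r i) (c j) (r j)) =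
      (n j / r j * Z + N * (n j / r j * ((norm (c j))\<^sup>2 - (r j)\<^sup>2))
        - 2 * (X \<bullet> (n j / r j) *\<^sub>R c j)) / 2"
    if "j \<in> A" for j
  proof -
    have "(\<Sum>i\<in>A. n i * n j * inv_dist (c i) (r i) (c j) (r j))
        = n j * (\<Sum>i\<in>A. n i * inv_dist (c i) (r i) (c j) (r j))"
      by (simp add: sum_distrib_left mult_ac)
    also have "\<dots> = (n j / r j * Z + N * (n j / r j * ((norm (c j))\<^sup>2 - (r j)\<^sup>2))
        - 2 * (X \<bullet> (n j / r j) *\<^sub>R c j)) / 2"
      using assms that by (simp add: sum_inv_dist_row N_def Z_def X_def field_simps)
    finally show ?thesis .
  qed
  have "(\<Sum>j\<in>A. \<Sum>i\<in>A. n i * n j * inv_dist (c i) (r i) (c j) (r j)) =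
      ((\<Sum>j\<in>A. n j / r j * Z) + (\<Sum>j\<in>A. N * (n j / r j * ((norm (c j))\<^sup>2 - (r j)\<^sup>2)))
        - (\<Sum>j\<in>A. 2 * (X \<bullet> (n j / r j) *\<^sub>R c j))) / 2"
    by (simp only: sum.cong[OF refl row] sum_divide_distrib[symmetric] sum.distrib sum_subtractf)
  also have "\<dots> = (N * Z + N * Z - 2 * (X \<bullet> X)) / 2"
    by (simp only: flip: sum_distrib_left sum_distrib_right inner_sum_right N_def Z_def X_def)
  finally show ?thesis
    by (simp add: N_def Z_def X_def power2_norm_eq_inner)
qed

lemma idlen_sq:
  assumes "0 \<le> r1" "0 \<le> r2" "-1 \<le> I"
  shows "(idlen r1 r2 I)\<^sup>2 = r1\<^sup>2 + r2\<^sup>2 + 2*I*r1*r2"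
proof -
  have "- (r1 * r2) \<le> I * (r1 * r2)"
    using mult_right_mono[OF assms(3), of "r1 * r2"] assms(1,2) by simp
  then have "(r1 - r2)\<^sup>2 \<le> r1\<^sup>2 + r2\<^sup>2 + 2*I*r1*r2"
    by (simp add: power2_diff algebra_simps)
  then have "0 \<le> r1\<^sup>2 + r2\<^sup>2 + 2*I*r1*r2"
    using zero_le_power2[of "r1 - r2"] by linarith
  then show ?thesis
    unfolding idlen_def by simp
qed

lemma tri_ineq_pos:
  assumes "tri_ineq u x y"
  shows "0 < u" "0 < x" "0 < y"
  using assms unfolding tri_ineq_def by linarith+

lemma tri_ineq_apex_height_pos:
  assumes "tri_ineq u x y"
  shows "((u\<^sup>2 + y\<^sup>2 - x\<^sup>2) / (2*y))\<^sup>2 < u\<^sup>2"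
proof -
  have "y \<noteq> 0" using tri_ineq_pos(3)[OF assms] by simp
  then have Heron: "u\<^sup>2 - ((u\<^sup>2 + y\<^sup>2 - x\<^sup>2) / (2*y))\<^sup>2
      = (x - u + y) * (x + u - y) * (u + y - x) * (u + y + x) / (4 * y\<^sup>2)"
    by (simp add: field_simps power2_eq_square)
  have "0 < (x - u + y) * (x + u - y) * (u + y - x) * (u + y + x)"
    using assms unfolding tri_ineq_def by (intro mult_pos_pos) auto
  then have "0 < (x - u + y) * (x + u - y) * (u + y - x) * (u + y + x) / (4 * y\<^sup>2)"
    using \<open>y \<noteq> 0\<close> by simp
  then show ?thesis
    using Heron by linarith
qed

lemma dist_apex:
  fixes u x y k :: real
  assumes "y \<noteq> 0" and "k\<^sup>2 = u\<^sup>2 - ((u\<^sup>2 + y\<^sup>2 - x\<^sup>2) / (2*y))\<^sup>2"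
  shows "(dist ((u\<^sup>2 + y\<^sup>2 - x\<^sup>2) / (2*y), k) 0)\<^sup>2 = u\<^sup>2"
    and "(dist ((u\<^sup>2 + y\<^sup>2 - x\<^sup>2) / (2*y), k) (y, 0))\<^sup>2 = x\<^sup>2"
  using assms unfolding dist_norm power2_norm_eq_inner zero_prod_def
  by (simp_all add: field_simps power2_eq_square)

lemma F_hinge_eq_inv_dist:
  "F_hinge p q r s a b c d e = inv_dist (vk p q r s a b c d e) p (vl p q r s a b c d e) r"
  unfolding F_hinge_def hinge_z_def inv_dist_def ..

lemma F_hinge_coordinates:
  "F_hinge p q r s a b c d e =
    ((fst (vk p q r s a b c d e) - fst (vl p q r s a b c d e))\<^sup>2
      + (snd (vk p q r s a b c d e) - snd (vl p q r s a b c d e))\<^sup>2 - p\<^sup>2 - r\<^sup>2) / (2*p*r)"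
  unfolding F_hinge_def hinge_z_def dist_prod_def dist_real_def by simp

locale hinge =
  fixes p q r s a b c d e :: real
  assumes radii: "0 < p" "0 < q" "0 < r" "0 < s"
    and inv_dists: "1 < a" "1 < b" "1 < c" "1 < d" "1 < e"
    and face_ijk: "tri_ineq (idlen p q a) (idlen s p d) (idlen q s e)"
    and face_ijl: "tri_ineq (idlen q r b) (idlen r s c) (idlen q s e)"
begin

abbreviation "ck \<equiv> vk p q r s a b c d e"
abbreviation "cl \<equiv> vl p q r s a b c d e"
abbreviation "cj \<equiv> (idlen q s e, 0::real)"

lemma ck_apex: "0 < snd ck" "(dist ck 0)\<^sup>2 = (idlen p q a)\<^sup>2" "(dist ck cj)\<^sup>2 = (idlen s p d)\<^sup>2"
proof -
  define h where "h = ((idlen p q a)\<^sup>2 + (idlen q s e)\<^sup>2 - (idlen s p d)\<^sup>2) / (2 * idlen q s e)"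
  have "h\<^sup>2 < (idlen p q a)\<^sup>2" using tri_ineq_apex_height_pos[OF face_ijk] by (simp add: h_def)
  moreover have "ck = (h, sqrt ((idlen p q a)\<^sup>2 - h\<^sup>2))"
    unfolding vk_def Let_def h_def ..
  moreover have "idlen q s e \<noteq> 0" using tri_ineq_pos(3)[OF face_ijk] by simp
  ultimately show "0 < snd ck" "(dist ck 0)\<^sup>2 = (idlen p q a)\<^sup>2" "(dist ck cj)\<^sup>2 = (idlen s p d)\<^sup>2"
    using dist_apex[of "idlen q s e" "sqrt ((idlen p q a)\<^sup>2 - h\<^sup>2)"] by (simp_all add: h_def)
qed

lemma cl_apex: "snd cl < 0" "(dist cl 0)\<^sup>2 = (idlen q r b)\<^sup>2" "(dist cl cj)\<^sup>2 = (idlen r s c)\<^sup>2"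
proof -
  define h where "h = ((idlen q r b)\<^sup>2 + (idlen q s e)\<^sup>2 - (idlen r s c)\<^sup>2) / (2 * idlen q s e)"
  have "h\<^sup>2 < (idlen q r b)\<^sup>2" using tri_ineq_apex_height_pos[OF face_ijl] by (simp add: h_def)
  moreover have "cl = (h, - sqrt ((idlen q r b)\<^sup>2 - h\<^sup>2))"
    unfolding vl_def Let_def h_def ..
  moreover have "idlen q s e \<noteq> 0" using tri_ineq_pos(3)[OF face_ijl] by simp
  ultimately show "snd cl < 0" "(dist cl 0)\<^sup>2 = (idlen q r b)\<^sup>2" "(dist cl cj)\<^sup>2 = (idlen r s c)\<^sup>2"
    using dist_apex[of "idlen q s e" "- sqrt ((idlen q r b)\<^sup>2 - h\<^sup>2)"] by (simp_all add: h_def)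
qed

lemma inv_dist_hinge:
  "inv_dist ck p 0 q = a" "inv_dist 0 q cl r = b" "inv_dist cl r cj s = c"
  "inv_dist ck p cj s = d" "inv_dist 0 q cj s = e"
proof -
  have "(dist (0::real \<times> real) cj)\<^sup>2 = (idlen q s e)\<^sup>2"
    by (simp add: dist_norm power2_norm_eq_inner zero_prod_def power2_eq_square)
  then show "inv_dist ck p 0 q = a" "inv_dist 0 q cl r = b" "inv_dist cl r cj s = c"
    "inv_dist ck p cj s = d" "inv_dist 0 q cj s = e"
    using ck_apex cl_apex radii inv_dists
    by (auto intro!: inv_dist_eqI simp: idlen_sq dist_commute algebra_simps)
qed

lemma inv_dist_hinge_sym:
  "inv_dist 0 q ck p = a" "inv_dist cl r 0 q = b" "inv_dist cj s cl r = c"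
  "inv_dist cj s ck p = d" "inv_dist cj s 0 q = e"
  using inv_dist_hinge by (simp_all add: inv_dist_commute)

lemma one_less_e_sq: "1 < e\<^sup>2"
  using one_less_power[OF inv_dists(5), of 2] by simp

abbreviation "sA \<equiv> sqrt (Delta a d e)"
abbreviation "sB \<equiv> sqrt (Delta b c e)"
abbreviation "sC \<equiv> sqrt (Delta c d (f_hinge p q r s a b c d e))"
abbreviation "sD \<equiv> sqrt (Delta a b (f_hinge p q r s a b c d e))"

lemma sA_pos: "0 < sA" and sB_pos: "0 < sB"
  using inv_dists by (simp_all add: Delta_pos)

lemma sC_eq: "sC = ((a + d*e) * sB + (b + c*e) * sA) / (e\<^sup>2 - 1)"
  and sD_eq: "sD = ((d + a*e) * sB + (c + b*e) * sA) / (e\<^sup>2 - 1)"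
proof -
  have e: "e\<^sup>2 \<noteq> 1" "0 < e\<^sup>2 - 1" using one_less_e_sq by simp_all
  have A: "sA\<^sup>2 = Delta a d e" and B: "sB\<^sup>2 = Delta b c e"
    using sA_pos sB_pos by (simp_all add: less_imp_le)
  then have A': "sA\<^sup>2 = Delta d a e" and B': "sB\<^sup>2 = Delta c b e"
    by (simp_all add: Delta_commute)
  have f_sym: "d*c + b*a + d*b*e + c*a*e + sA * sB = a*b + c*d + a*c*e + b*d*e + sA * sB"
    by algebra
  have "0 \<le> (a + d*e) * sB + (b + c*e) * sA" "0 \<le> (d + a*e) * sB + (c + b*e) * sA"
    using sA_pos sB_pos inv_dists by (simp_all add: less_imp_le)
  moreover note Delta_f_square[OF e(1) A B]
    Delta_f_square[where a=d and d=a and b=c and c=b, OF e(1) A' B']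
  ultimately show "sC = ((a + d*e) * sB + (b + c*e) * sA) / (e\<^sup>2 - 1)"
    "sD = ((d + a*e) * sB + (c + b*e) * sA) / (e\<^sup>2 - 1)"
    using e(2) by (simp_all add: f_hinge_def Delta_commute f_sym)
qed

lemma hinge_kernel:
  "- sB - a * sC + f_hinge p q r s a b c d e * sA - d * sD = 0"
  "a * sB + sC + b * sA - e * sD = 0"
  "f_hinge p q r s a b c d e * sB - b * sC - sA - c * sD = 0"
  "d * sB - e * sC + c * sA + sD = 0"
proof -
  have "e\<^sup>2 \<noteq> 1" using one_less_e_sq by simp
  moreover have "sA\<^sup>2 = Delta a d e" "sB\<^sup>2 = Delta b c e"
    using sA_pos sB_pos by (simp_all add: less_imp_le)
  ultimately show "- sB - a * sC + f_hinge p q r s a b c d e * sA - d * sD = 0"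
    "a * sB + sC + b * sA - e * sD = 0"
    "f_hinge p q r s a b c d e * sB - b * sC - sA - c * sD = 0"
    "d * sB - e * sC + c * sA + sD = 0"
    unfolding sC_eq sD_eq using inv_dist_matrix_kernel[where SA=sA and SB=sB]
    by (simp_all add: f_hinge_def)
qed

abbreviation "centre \<equiv> (!) [ck, 0, cl, cj]"
abbreviation "radius \<equiv> (!) [p, q, r, s]"

lemma radius_nonzero: "\<forall>i\<in>{0,1,2,3}. radius i \<noteq> 0"
  using radii by auto

lemma inv_dist_kernel_defect:
  assumes "j \<in> {0,1,2,3}"
  shows "(\<Sum>i\<in>{0,1,2,3}.
      [sB, - sC, sA, - sD] ! i * inv_dist (centre i) (radius i) (centre j) (radius j))
    = (F_hinge p q r s a b c d e - f_hinge p q r s a b c d e) * [sA, 0, sB, 0] ! j"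
  using assms hinge_kernel radii
  by (auto simp: inv_dist_hinge inv_dist_hinge_sym F_hinge_eq_inv_dist inv_dist_commute[of cl r ck p]
      algebra_simps)

lemma F_hinge_le_f_hinge: "F_hinge p q r s a b c d e \<le> f_hinge p q r s a b c d e"
proof -
  define F where "F = F_hinge p q r s a b c d e"
  define f where "f = f_hinge p q r s a b c d e"
  define t where "t = (sC / q + sD / s - sB / p - sA / r) / (1 / q + 1 / s)"
  define n where "n = (!) [sB, t - sC, sA, t - sD]"
  have "0 < 1 / q + 1 / s"
    using radii by (simp add: add_pos_pos)
  then have "t * (1 / q + 1 / s) = sC / q + sD / s - sB / p - sA / r"
    unfolding t_def by simp
  moreover have "(\<Sum>i\<in>{0,1,2,3}. n i / radius i)
      = sB / p + sA / r - sC / q - sD / s + t * (1 / q + 1 / s)"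
    by (simp add: n_def diff_divide_distrib distrib_left)
  ultimately have "(\<Sum>i\<in>{0,1,2,3}. n i / radius i) = 0"
    by simp
  then have "(\<Sum>j\<in>{0,1,2,3}. \<Sum>i\<in>{0,1,2,3}.
      n i * n j * inv_dist (centre i) (radius i) (centre j) (radius j)) \<le> 0"
    using sum_inv_dist_quadratic[OF radius_nonzero, of n centre] by simp
  moreover have "(\<Sum>j\<in>{0,1,2,3}. \<Sum>i\<in>{0,1,2,3}.
      n i * n j * inv_dist (centre i) (radius i) (centre j) (radius j))
      = - 2 * (sA * sB * (f - F) - (e - 1) * t\<^sup>2)"
    using hinge_kernel radii
    by (simp add: n_def inv_dist_hinge inv_dist_hinge_sym F_def f_def
        F_hinge_eq_inv_dist inv_dist_commute[of cl r ck p] del: real_sqrt_mult_self) algebra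
  ultimately have "- 2 * (sA * sB * (f - F) - (e - 1) * t\<^sup>2) \<le> 0"
    by simp
  then have "(e - 1) * t\<^sup>2 \<le> sA * sB * (f - F)"
    by (simp add: algebra_simps)
  moreover have "0 \<le> (e - 1) * t\<^sup>2"
    using inv_dists(5) by simp
  ultimately have "0 \<le> sA * sB * (f - F)"
    by linarith
  then show ?thesis
    using mult_pos_pos[OF sA_pos sB_pos] by (simp add: F_def f_def zero_le_mult_iff)
qed

lemma F_hinge_eq_f_hinge:
  assumes "sB / p + sA / r = sC / q + sD / s"
  shows "F_hinge p q r s a b c d e = f_hinge p q r s a b c d e"
proof -
  define F where "F = F_hinge p q r s a b c d e"
  define f where "f = f_hinge p q r s a b c d e"
  define n where "n = (!) [sB, - sC, sA, - sD]"
  define Z where "Z = (\<Sum>i\<in>{0,1,2,3}. n i / radius i * ((norm (centre i))\<^sup>2 - (radius i)\<^sup>2))"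
  define X where "X = (\<Sum>i\<in>{0,1,2,3}. (n i / radius i) *\<^sub>R centre i)"
  have N: "(\<Sum>i\<in>{0,1,2,3}. n i / radius i) = 0"
    using assms by (simp add: n_def)
  have defect: "(Z - 2 * (X \<bullet> centre j)) / (2 * radius j) = (F - f) * [sA, 0, sB, 0] ! j"
    if "j \<in> {0,1,2,3}" for j
  proof -
    have "radius j \<noteq> 0" using radius_nonzero that by blast
    from sum_inv_dist_row[where n=n and c=centre and z="centre j", OF radius_nonzero this]
    show ?thesis
      using inv_dist_kernel_defect[OF that] unfolding N Z_def[symmetric] X_def[symmetric]
      by (simp add: n_def F_def f_def)
  qed
  have "Z = 0"
    using defect[of 1] radii by simp
  have "fst X * idlen q s e = 0"
    using defect[of 3] radii \<open>Z = 0\<close> by (simp add: inner_prod_def)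
  then have "fst X = 0"
    using tri_ineq_pos(3)[OF face_ijk] by simp
  then have k: "snd X * snd ck = p * (f - F) * sA" and l: "snd X * snd cl = r * (f - F) * sB"
    using defect[of 0] defect[of 2] radii \<open>Z = 0\<close> by (simp_all add: inner_prod_def field_simps)
  \<comment> \<open>v_k and v_l lie on opposite sides of the line v_i v_j\<close>
  have "0 < r * sB * snd ck" and "p * sA * snd cl < 0"
    using radii sA_pos sB_pos ck_apex(1) cl_apex(1) by (simp_all add: mult_pos_neg)
  moreover have "snd X * (r * sB * snd ck - p * sA * snd cl) = 0"
    using k l by algebra
  ultimately have "snd X = 0"
    by simp
  then have "(f - F) * sA = 0"
    using k radii by simp
  then show ?thesis
    using sA_pos by (simp add: F_def f_def)
qed

end

definition hinge_domain :: "(real^9) set" where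
  "hinge_domain = {X. hinge (X$1) (X$2) (X$3) (X$4) (X$5) (X$6) (X$7) (X$8) (X$9)}"

lemma open_hinge_domain: "open hinge_domain"
  unfolding hinge_domain_def hinge_def tri_ineq_def idlen_def
  by (intro open_Collect_conj open_Collect_less continuous_intros)

lemma F9_le_f9: "Y \<in> hinge_domain \<Longrightarrow> F9 Y \<le> f9 Y"
  unfolding hinge_domain_def F9_def f9_def using hinge.F_hinge_le_f_hinge by blast

lemma differentiable_vec_nth: "(\<lambda>x. x $ i) differentiable F"
  by (rule bounded_linear_imp_differentiable) (rule bounded_linear_vec_nth)

lemma differentiable_real_sqrt:
  assumes "f differentiable (at x)" "0 < f x"
  shows "(\<lambda>x. sqrt (f x)) differentiable (at x)"
  using assms has_derivative_real_sqrt unfolding differentiable_def by blast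

lemma differentiable_F9:
  assumes "X \<in> hinge_domain"
  shows "F9 differentiable (at X)"
proof -
  interpret hinge "X$1" "X$2" "X$3" "X$4" "X$5" "X$6" "X$7" "X$8" "X$9"
    using assms by (simp add: hinge_domain_def)
  show ?thesis
    unfolding F9_def[abs_def] F_hinge_coordinates vk_def vl_def Let_def fst_conv snd_conv idlen_def
    apply (intro differentiable_divide differentiable_diff differentiable_add differentiable_mult
       differentiable_minus differentiable_power differentiable_real_sqrt differentiable_const
       differentiable_vec_nth)
    using tri_ineq_apex_height_pos[OF face_ijk] tri_ineq_apex_height_pos[OF face_ijl]
      tri_ineq_pos[OF face_ijk] tri_ineq_pos[OF face_ijl] radii
    by (simp_all add: idlen_def)
qed

lemma differentiable_f9:
  assumes "X \<in> hinge_domain"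
  shows "f9 differentiable (at X)"
proof -
  interpret hinge "X$1" "X$2" "X$3" "X$4" "X$5" "X$6" "X$7" "X$8" "X$9"
    using assms by (simp add: hinge_domain_def)
  show ?thesis
    unfolding f9_def[abs_def] f_hinge_def Delta_def
    apply (intro differentiable_divide differentiable_diff differentiable_add differentiable_mult
       differentiable_power differentiable_real_sqrt differentiable_const differentiable_vec_nth)
    using sA_pos sB_pos one_less_e_sq unfolding Delta_def by simp_all
qed

theorem lemma5p4:
  fixes X :: "real^9" and p q r s a b c d e :: real
  assumes vars: "X$1 = p" "X$2 = q" "X$3 = r" "X$4 = s" "X$5 = a"
                "X$6 = b" "X$7 = c" "X$8 = d" "X$9 = e"
    and radii: "p > 0" "q > 0" "r > 0" "s > 0"
    and invd: "a > 1" "b > 1" "c > 1" "d > 1" "e > 1"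
    and face_ijk: "tri_ineq (idlen p q a) (idlen s p d) (idlen q s e)"
    and face_ijl: "tri_ineq (idlen q r b) (idlen r s c) (idlen q s e)"
    and cond: "sqrt (Delta b c e) / p + sqrt (Delta a d e) / r =
               sqrt (Delta c d (f_hinge p q r s a b c d e)) / q
             + sqrt (Delta a b (f_hinge p q r s a b c d e)) / s"
  shows "\<exists>D. (F9 has_derivative D) (at X) \<and> (f9 has_derivative D) (at X)"
proof -
  have hinge: "hinge p q r s a b c d e"
    using radii invd face_ijk face_ijl by unfold_locales
  then have X: "X \<in> hinge_domain"
    by (simp add: hinge_domain_def vars)
  obtain DF Df where DF: "(F9 has_derivative DF) (at X)" and Df: "(f9 has_derivative Df) (at X)"
    using differentiable_F9[OF X] differentiable_f9[OF X] unfolding differentiable_def by blast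
  have "F9 X = f9 X"
    using hinge.F_hinge_eq_f_hinge[OF hinge cond] by (simp add: F9_def f9_def vars)
  then have "\<forall>Y\<in>hinge_domain. f9 X - F9 X \<le> f9 Y - F9 Y"
    using F9_le_f9 by simp
  then have "(\<lambda>h. Df h - DF h) = (\<lambda>h. 0)"
    using differential_zero_maxmin[OF X open_hinge_domain has_derivative_diff[OF Df DF]] by blast
  then have "Df = DF"
    by (simp add: fun_eq_iff)
  then show ?thesis
    using DF Df by blast
qed

end
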